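(* Let $k\ge 1$ and let $\mathcal P=\{p_1,\dots,p_{k^2}\}$ be a family of real polynomials in the commuting variables $x_1,\dots,x_{2k^2}$. Suppose $\mathcal P$ admits two nc representations $p(X,Y)$ and $\widetilde p(\widetilde X,\widetilde Y)$ with $p,\widetilde p\in\mathcal W$. Then there exists a $k\times k$ permutation matrix $\Pi$ such that one of the following holds: (1) $X=\Pi^T\widetilde X\Pi$ and $Y=\Pi^T\widetilde Y\Pi$; (2) $X=\Pi^T\widetilde X^T\Pi$ and $Y=\Pi^T\widetilde Y^T\Pi$; (3) $X=\Pi^T\widetilde Y\Pi$ and $Y=\Pi^T\widetilde X\Pi$; (4) $X=\Pi^T\widetilde Y^T\Pi$ and $Y=\Pi^T\widetilde X^T\Pi$.
   Context: An nc polynomial is a real linear combination of words in two noncommuting letters $X,Y$. The family $\mathcal P$ admits an nc representation $p(X,Y)$ if there are $k\times k$ matrices $X$ and $Y$ whose $2k^2$ entries are the variables $x_1,\dots,x_{2k^2}$, each used exactly once (i.e. the variables are placed into $X$ and $Y$ via a permutation of $\{1,\dots,2k^2\}$), and an nc polynomial $p$ such that the matrix $p(X,Y)$ (computed by matrix multiplication with commuting entries) is a $k\times k$ array whose entries are $p_1,\dots,p_{k^2}$, each exactly once, in some order. For integers $i,j\ge0$, $\varphi(i,j)$ denotes the sum of the coefficients of all monomials of $p$ having degree $i$ in $X$ and degree $j$ in $Y$ (equivalently, the coefficient of $x^iy^j$ in $p(xI,yI)$); $\varphi(i,j;X)$ (resp. $\varphi(i,j;Y)$) is the sum of coefficients of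 such monomials that end with $X$ (resp. with $Y$); $\varphi(X;i,j)$ (resp. $\varphi(Y;i,j)$) is the sum of coefficients of such monomials that begin with $X$ (resp. with $Y$). $\mathcal W$ is the set of nc polynomials $p$ of degree $d>1$ for which there exists an integer $t\ge2$ with $\varphi(t,0)\ne0$, $\varphi(0,t)\ne0$, $\varphi(t,0)\ne\varphi(0,t)$, and at least one of: (1) $t\varphi(t,0)\ne\varphi(t-1,1)$; (2) $t\varphi(0,t)\ne\varphi(1,t-1)$; (3) $\varphi(t-1,1;Y)\ne0$ and $\varphi(t,0)\ne\varphi(t-1,1;Y)$; (4) $\varphi(Y;t-1,1)\ne0$ and $\varphi(t,0)\ne\varphi(Y;t-1,1)$; (5) $\varphi(1,t-1;X)\ne0$ and $\varphi(0,t)\ne\varphi(1,t-1;X)$; (6) $\varphi(X;1,t-1)\ne0$ and $\varphi(0,t)\ne\varphi(X;1,t-1)$. *)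

theory Defs
  imports Complex_Main "HOL-Library.Poly_Mapping" "HOL-Combinatorics.Permutations"
begin

text \<open>Commutative real polynomials in the variables x_0, x_1, ... (0-based indexing):
  monomials are finitely supported exponent vectors finitely supported nat-to-nat maps.\<close>
type_synonym cpoly = "(nat \<Rightarrow>\<^sub>0 nat) \<Rightarrow>\<^sub>0 real"

definition cvar :: "nat \<Rightarrow> cpoly" where
  "cvar i = Poly_Mapping.single (Poly_Mapping.single i 1) 1"

definition cconst :: "real \<Rightarrow> cpoly" where
  "cconst c = Poly_Mapping.single 0 c"

text \<open>nc polynomials: finitely supported real coefficients on words in two letters;
  True stands for the letter X, False for the letter Y.\<close>
type_synonym ncpoly = "bool list \<Rightarrow>\<^sub>0 real"

text \<open>k x k matrices as functions on indices; only entries with indices < k matter.\<close>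
type_synonym 'a mat = "nat \<Rightarrow> nat \<Rightarrow> 'a"

definition mat_mult :: "nat \<Rightarrow> 'a::comm_semiring_1 mat \<Rightarrow> 'a mat \<Rightarrow> 'a mat" where
  "mat_mult k A B = (\<lambda>i j. \<Sum>l<k. A i l * B l j)"

definition mat_one :: "'a::comm_semiring_1 mat" where
  "mat_one = (\<lambda>i j. if i = j then 1 else 0)"

definition mat_transpose :: "'a mat \<Rightarrow> 'a mat" where
  "mat_transpose A = (\<lambda>i j. A j i)"

definition mat_eq :: "nat \<Rightarrow> 'a mat \<Rightarrow> 'a mat \<Rightarrow> bool" where
  "mat_eq k A B \<longleftrightarrow> (\<forall>i<k. \<forall>j<k. A i j = B i j)"

fun word_eval :: "nat \<Rightarrow> 'a::comm_semiring_1 mat \<Rightarrow> 'a mat \<Rightarrow> bool list \<Rightarrow> 'a mat" where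
  "word_eval k X Y [] = mat_one"
| "word_eval k X Y (b # w) = mat_mult k (if b then X else Y) (word_eval k X Y w)"

definition nc_eval :: "nat \<Rightarrow> ncpoly \<Rightarrow> cpoly mat \<Rightarrow> cpoly mat \<Rightarrow> cpoly mat" where
  "nc_eval k p X Y = (\<lambda>i j. \<Sum>w\<in>Poly_Mapping.keys p. cconst (Poly_Mapping.lookup p w) * word_eval k X Y w i j)"

definition var_mat :: "(bool \<Rightarrow> nat \<Rightarrow> nat \<Rightarrow> nat) \<Rightarrow> bool \<Rightarrow> cpoly mat" where
  "var_mat s b = (\<lambda>i j. cvar (s b i j))"

definition nc_rep :: "nat \<Rightarrow> (nat \<Rightarrow> cpoly) \<Rightarrow> (bool \<Rightarrow> nat \<Rightarrow> nat \<Rightarrow> nat) \<Rightarrow> ncpoly \<Rightarrow> bool" where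
  "nc_rep k P s p \<longleftrightarrow>
     bij_betw (\<lambda>(b, i, j). s b i j) (UNIV \<times> {..<k} \<times> {..<k}) {..<2 * k^2} \<and>
     (\<exists>\<tau>. bij_betw \<tau> ({..<k} \<times> {..<k}) {..<k^2} \<and>
        (\<forall>i<k. \<forall>j<k. nc_eval k p (var_mat s True) (var_mat s False) i j = P (\<tau> (i, j))))"

definition nc_degree :: "ncpoly \<Rightarrow> nat" where
  "nc_degree p = Max (length ` Poly_Mapping.keys p)"

definition phiQ :: "ncpoly \<Rightarrow> (bool list \<Rightarrow> bool) \<Rightarrow> nat \<Rightarrow> nat \<Rightarrow> real" where
  "phiQ p Q i j = (\<Sum>w\<in>{w\<in>Poly_Mapping.keys p. count_list w True = i \<and> count_list w False = j \<and> Q w}. Poly_Mapping.lookup p w)"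

definition phi :: "ncpoly \<Rightarrow> nat \<Rightarrow> nat \<Rightarrow> real" where
  "phi p i j = phiQ p (\<lambda>_. True) i j"

definition phi_end :: "ncpoly \<Rightarrow> bool \<Rightarrow> nat \<Rightarrow> nat \<Rightarrow> real" where
  "phi_end p b i j = phiQ p (\<lambda>w. w \<noteq> [] \<and> last w = b) i j"

definition phi_begin :: "ncpoly \<Rightarrow> bool \<Rightarrow> nat \<Rightarrow> nat \<Rightarrow> real" where
  "phi_begin p b i j = phiQ p (\<lambda>w. w \<noteq> [] \<and> hd w = b) i j"

definition classW :: "ncpoly set" where
  "classW = {p. nc_degree p > 1 \<and>
     (\<exists>t\<ge>2. phi p t 0 \<noteq> 0 \<and> phi p 0 t \<noteq> 0 \<and> phi p t 0 \<noteq> phi p 0 t \<and>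
        (real t * phi p t 0 \<noteq> phi p (t - 1) 1
         \<or> real t * phi p 0 t \<noteq> phi p 1 (t - 1)
         \<or> (phi_end p False (t - 1) 1 \<noteq> 0 \<and> phi p t 0 \<noteq> phi_end p False (t - 1) 1)
         \<or> (phi_begin p False (t - 1) 1 \<noteq> 0 \<and> phi p t 0 \<noteq> phi_begin p False (t - 1) 1)
         \<or> (phi_end p True 1 (t - 1) \<noteq> 0 \<and> phi p 0 t \<noteq> phi_end p True 1 (t - 1))
         \<or> (phi_begin p True 1 (t - 1) \<noteq> 0 \<and> phi p 0 t \<noteq> phi_begin p True 1 (t - 1))))}"

definition is_perm_mat :: "nat \<Rightarrow> 'a::zero_neq_one mat \<Rightarrow> bool" where
  "is_perm_mat k M \<longleftrightarrow> (\<exists>\<pi>. \<pi> permutes {..<k} \<and>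
      (\<forall>i<k. \<forall>j<k. M i j = (if \<pi> i = j then 1 else 0)))"

definition conj_perm :: "nat \<Rightarrow> 'a::comm_semiring_1 mat \<Rightarrow> 'a mat \<Rightarrow> 'a mat" where
  "conj_perm k Q A = mat_mult k (mat_mult k (mat_transpose Q) A) Q"

end

theory Submission
  imports Defs
begin

text \<open>
  Read the entry (i, j) of X, resp. Y, as an edge from i to j labelled by the letter X, resp. Y.
  Then the entry (r, r') of w(X, Y) is the sum of the monomials of the walks from r to r'
  labelled by w. Since every variable occurs exactly once, a monomial is the same thing as a
  multiset N of edges, and its coefficient in the entry (r, r') of p(X, Y) is the number of
  Eulerian trails of N from r to r', each weighted by the coefficient in p of its label.

  Two representations of the same family match the entries of p(X, Y) and p'(X', Y') by some
  bijection \<sigma>. Comparing the coefficients of a few monomials (the t-th power of a loop, t - 1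
  loops followed by one edge, t - 2 loops followed by two consecutive edges) shows that the
  diagonal goes to the diagonal along a permutation \<pi>, that an off-diagonal entry (a, b) goes
  to (\<pi> a, \<pi> b) or to (\<pi> b, \<pi> a), with the same orientation for all pairs, and
  that the letters X, Y are either kept or exchanged simultaneously everywhere. The last step is
  where p \<in> W is needed: if the letters of a single off-diagonal entry were exchanged, every
  word with one letter changed in X^t or Y^t would have the coefficient of the pure power, which
  the conditions defining W exclude.
\<close>

section \<open>Walks and Eulerian trails\<close>

text \<open>An edge (b, i, j) stands for the entry (i, j) of X if b, of Y otherwise.\<close>

type_synonym edge = "bool \<times> nat \<times> nat"

abbreviation src :: "edge \<Rightarrow> nat" where "src e \<equiv> fst (snd e)"
abbreviation tgt :: "edge \<Rightarrow> nat" where "tgt e \<equiv> snd (snd e)"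

fun walk_from :: "nat \<Rightarrow> edge list \<Rightarrow> bool" where
  "walk_from x [] = True"
| "walk_from x (e # T) \<longleftrightarrow> src e = x \<and> walk_from (tgt e) T"

fun walk_end :: "nat \<Rightarrow> edge list \<Rightarrow> nat" where
  "walk_end x [] = x"
| "walk_end x (e # T) = walk_end (tgt e) T"

lemma walk_from_append: "walk_from x (T1 @ T2) \<longleftrightarrow> walk_from x T1 \<and> walk_from (walk_end x T1) T2"
  by (induction T1 arbitrary: x) auto

lemma walk_end_append: "walk_end x (T1 @ T2) = walk_end (walk_end x T1) T2"
  by (induction T1 arbitrary: x) auto

lemma walk_of_loops:
  assumes "walk_from x T" "\<forall>e\<in>set T. \<exists>y. e = (l, y, y)"
  shows "T = replicate (length T) (l, x, x) \<and> walk_end x T = x"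
  using assms by (induction T arbitrary: x) auto

lemma walk_replicate_loop: "walk_from x (replicate n (b, x, x)) \<and> walk_end x (replicate n (b, x, x)) = x"
  by (induction n) auto

definition in_degree :: "edge multiset \<Rightarrow> nat \<Rightarrow> nat" where
  "in_degree N z = size {#e \<in># N. tgt e = z#}"

definition out_degree :: "edge multiset \<Rightarrow> nat \<Rightarrow> nat" where
  "out_degree N z = size {#e \<in># N. src e = z#}"

lemma walk_degree_balance:
  "walk_from x T \<Longrightarrow>
     in_degree (mset T) z + of_bool (x = z) = out_degree (mset T) z + of_bool (walk_end x T = z)"
proof (induction T arbitrary: x)
  case (Cons e T)
  obtain b u v where e: "e = (b, u, v)" by (cases e)
  have "u = x" "walk_from v T" using Cons.prems by (simp_all add: e)
  then show ?case using Cons.IH[of v]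
    by (cases "u = z"; cases "v = z") (auto simp: in_degree_def out_degree_def e)
qed (simp add: in_degree_def out_degree_def)

lemma filter_mset_replicate_mset:
  "filter_mset P (replicate_mset n x) = (if P x then replicate_mset n x else {#})"
  by (induction n) auto

definition euler_trails :: "edge multiset \<Rightarrow> nat \<Rightarrow> nat \<Rightarrow> edge list set" where
  "euler_trails N r r' = {T. walk_from r T \<and> walk_end r T = r' \<and> mset T = N}"

lemma finite_euler_trails: "finite (euler_trails N r r')"
proof (rule finite_subset)
  show "euler_trails N r r' \<subseteq> {T. set T \<subseteq> set_mset N \<and> length T = size N}"
    by (auto simp: euler_trails_def)
qed (rule finite_lists_length_eq, simp)

lemma euler_trails_unique:
  assumes "\<And>T. T \<in> euler_trails N r r' \<Longrightarrow> T = T0 \<and> P" and "P \<Longrightarrow> T0 \<in> euler_trails N r r'"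
  shows "euler_trails N r r' = (if P then {T0} else {})"
  using assms by auto

lemma euler_trails_unbalanced:
  assumes "out_degree N z + 2 \<le> in_degree N z \<or> in_degree N z + 2 \<le> out_degree N z"
  shows "euler_trails N r r' = {}"
proof -
  have False if "walk_from r T" "mset T = N" for T
    using walk_degree_balance[OF that(1), of z] assms that(2)
    by (cases "r = z"; cases "walk_end r T = z") auto
  then show ?thesis by (auto simp: euler_trails_def)
qed

lemma split_list_mset:
  assumes "mset T = M + {#e#}"
  obtains T1 T2 where "T = T1 @ e # T2" "mset T1 + mset T2 = M"
proof -
  have "e \<in># mset T" using assms by simp
  then have "e \<in> set T" by simp
  then obtain T1 T2 where T: "T = T1 @ e # T2" by (meson split_list)
  then have "mset T1 + mset T2 = M" using assms by simp
  with T show thesis using that by blast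
qed

lemma set_append_mset_eq: "mset T1 + mset T2 = M \<Longrightarrow> set T1 \<union> set T2 = set_mset M"
  by auto

lemma mset_eq_replicate_mset: "mset T = replicate_mset n e \<longleftrightarrow> T = replicate n e"
  by (metis mset_replicate replicate_length_same set_mset_mset size_mset size_replicate_mset
      in_replicate_mset)

lemma euler_trails_loop_power:
  assumes "2 \<le> t"
  shows "euler_trails (replicate_mset t (l, c, d)) r r' =
    (if c = d \<and> r = c \<and> r' = c then {replicate t (l, c, c)} else {})"
proof (rule euler_trails_unique)
  obtain t' where t: "t = Suc (Suc t')" using assms by (metis add_2_eq_Suc le_iff_add)
  fix T assume "T \<in> euler_trails (replicate_mset t (l, c, d)) r r'"
  then have walk: "walk_from r T" "walk_end r T = r'" and "mset T = replicate_mset t (l, c, d)"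
    by (simp_all add: euler_trails_def)
  then have "T = replicate t (l, c, d)" by (simp add: mset_eq_replicate_mset)
  with walk show "T = replicate t (l, c, c) \<and> c = d \<and> r = c \<and> r' = c"
    using walk_replicate_loop[of c t' l] by (auto simp: t)
qed (use walk_replicate_loop in \<open>simp add: euler_trails_def\<close>)

lemma euler_trails_one_step:
  assumes ab: "a \<noteq> b"
  shows "euler_trails (replicate_mset i (l0, a, a) + {#(l, a, b)#} + replicate_mset j (l0, b, b)) r r' =
    (if r = a \<and> r' = b then {replicate i (l0, a, a) @ (l, a, b) # replicate j (l0, b, b)} else {})"
    (is "euler_trails ?N r r' = _")
proof (rule euler_trails_unique)
  fix T assume "T \<in> euler_trails ?N r r'"
  then have walk: "walk_from r T" "walk_end r T = r'" and N: "mset T = ?N"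
    by (simp_all add: euler_trails_def)
  obtain T1 T2 where T: "T = T1 @ (l, a, b) # T2"
    and M: "mset T1 + mset T2 = replicate_mset i (l0, a, a) + replicate_mset j (l0, b, b)"
  proof (rule split_list_mset)
    show "mset T = replicate_mset i (l0, a, a) + replicate_mset j (l0, b, b) + {#(l, a, b)#}"
      using N by simp
  qed
  have loops: "\<forall>e\<in>set T1 \<union> set T2. \<exists>y. e = (l0, y, y)"
    unfolding set_append_mset_eq[OF M] by auto
  have w1: "walk_from r T1" "walk_end r T1 = a" and w2: "walk_from b T2"
    using walk(1) by (simp_all add: T walk_from_append)
  define i1 where "i1 = length T1"
  define j1 where "j1 = length T2"
  have "\<forall>e\<in>set T1. \<exists>y. e = (l0, y, y)" "\<forall>e\<in>set T2. \<exists>y. e = (l0, y, y)"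
    using loops by auto
  then have T1: "T1 = replicate i1 (l0, a, a)" and "r = a"
    and T2: "T2 = replicate j1 (l0, b, b)" and "walk_end b T2 = b"
    using walk_of_loops[OF w1(1)] walk_of_loops[OF w2] w1(2) unfolding i1_def j1_def by auto
  have "replicate_mset i1 (l0, a, a) + replicate_mset j1 (l0, b, b) =
      replicate_mset i (l0, a, a) + replicate_mset j (l0, b, b)"
    using M by (simp add: T1 T2)
  from arg_cong[OF this, of "\<lambda>M. count M (l0, a, a)"] arg_cong[OF this, of "\<lambda>M. count M (l0, b, b)"]
  have "i1 = i" "j1 = j" using ab by auto
  moreover have "r' = b" using walk(2) \<open>walk_end b T2 = b\<close> by (simp add: T walk_end_append w1(2))
  ultimately show "T = replicate i (l0, a, a) @ (l, a, b) # replicate j (l0, b, b) \<and> r = a \<and> r' = b"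
    using T T1 T2 \<open>r = a\<close> by simp
next
  assume "r = a \<and> r' = b"
  then show "replicate i (l0, a, a) @ (l, a, b) # replicate j (l0, b, b) \<in> euler_trails ?N r r'"
    using walk_replicate_loop[of a i l0] walk_replicate_loop[of b j l0]
    by (simp add: euler_trails_def walk_from_append walk_end_append)
qed

lemma euler_trails_two_steps:
  assumes ab: "a \<noteq> b" and bc: "b \<noteq> c" and ac: "a \<noteq> c"
  shows "euler_trails (replicate_mset n (l0, a, a) + {#(l1, a, b)#} + {#(l2, b, c)#}) a c =
    {replicate n (l0, a, a) @ [(l1, a, b), (l2, b, c)]}"
    (is "euler_trails ?N a c = {?T0}")
proof -
  have "T = ?T0" if "T \<in> euler_trails ?N a c" for T
  proof -
    have walk: "walk_from a T" "walk_end a T = c" and N: "mset T = ?N"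
      using that by (simp_all add: euler_trails_def)
    obtain T1 T2 where T: "T = T1 @ (l2, b, c) # T2"
      and M: "mset T1 + mset T2 = replicate_mset n (l0, a, a) + {#(l1, a, b)#}"
      using N by (rule split_list_mset)
    have w1: "walk_from a T1" "walk_end a T1 = b" and w2: "walk_from c T2"
      using walk(1) by (simp_all add: T walk_from_append)
    have "set T1 \<union> set T2 \<subseteq> {(l0, a, a), (l1, a, b)}"
      unfolding set_append_mset_eq[OF M] by auto
    then have "\<forall>e\<in>set T2. src e = a" by auto
    then have "T2 = []" using w2 ac by (cases T2) auto
    then have "T1 \<in> euler_trails (replicate_mset n (l0, a, a) + {#(l1, a, b)#} + replicate_mset 0 (l0, b, b)) a b"
      using w1 M by (simp add: euler_trails_def)
    then show ?thesis using \<open>T2 = []\<close> T unfolding euler_trails_one_step[OF ab] by simp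
  qed
  moreover have "?T0 \<in> euler_trails ?N a c"
    using walk_replicate_loop[of a n l0] by (simp add: euler_trails_def walk_from_append walk_end_append)
  ultimately show ?thesis by blast
qed

lemma euler_trails_loops_off_edge:
  assumes cd: "c \<noteq> d" and n: "1 \<le> n" and ac: "a \<noteq> c" and ad: "a \<noteq> d"
  shows "euler_trails (replicate_mset n (l0, a, a) + {#(l, c, d)#}) r r' = {}"
proof -
  have False if walk: "walk_from r T" and N: "mset T = replicate_mset n (l0, a, a) + {#(l, c, d)#}" for T
  proof -
    obtain T1 T2 where T: "T = T1 @ (l, c, d) # T2" and M: "mset T1 + mset T2 = replicate_mset n (l0, a, a)"
      using N by (rule split_list_mset)
    have w1: "walk_from r T1" "walk_end r T1 = c" and w2: "walk_from d T2"
      using walk by (simp_all add: T walk_from_append)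
    have "set T1 \<union> set T2 \<subseteq> {(l0, a, a)}"
      unfolding set_append_mset_eq[OF M] by auto
    then have loops: "\<forall>e\<in>set T1 \<union> set T2. e = (l0, a, a)" by auto
    have "T2 = []" using w2 loops ad by (cases T2) auto
    then have "T1 \<noteq> []" using arg_cong[OF M, of size] n by auto
    then obtain e T1' where "T1 = e # T1'" by (cases T1) auto
    then have "a = r" using w1(1) loops by auto
    have "\<forall>e\<in>set T1. \<exists>y. e = (l0, y, y)" using loops by auto
    then have "r = c" using walk_of_loops[OF w1(1)] w1(2) by auto
    with \<open>a = r\<close> ac show False by simp
  qed
  then show ?thesis by (auto simp: euler_trails_def)
qed

section \<open>Entries of p(X,Y) as weighted Eulerian trails\<close>

definition edges :: "nat \<Rightarrow> edge set" where
  "edges k = UNIV \<times> {..<k} \<times> {..<k}"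

definition edge_var :: "(bool \<Rightarrow> nat \<Rightarrow> nat \<Rightarrow> nat) \<Rightarrow> edge \<Rightarrow> nat" where
  "edge_var s = (\<lambda>(b, i, j). s b i j)"

lemma edges_iff [simp]: "(b, i, j) \<in> edges k \<longleftrightarrow> i < k \<and> j < k"
  by (simp add: edges_def)

lemma edge_var_apply [simp]: "edge_var s (b, i, j) = s b i j"
  by (simp add: edge_var_def)

definition monomial_of :: "nat multiset \<Rightarrow> (nat \<Rightarrow>\<^sub>0 nat)" where
  "monomial_of M = (\<Sum>x\<in>#M. Poly_Mapping.single x 1)"

lemma lookup_monomial_of: "Poly_Mapping.lookup (monomial_of M) x = count M x"
  by (induction M) (auto simp: monomial_of_def lookup_add lookup_single when_def)

lemma monomial_of_inject: "monomial_of M = monomial_of N \<longleftrightarrow> M = N"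
  by (metis lookup_monomial_of multiset_eqI)

definition walk_monomial :: "(bool \<Rightarrow> nat \<Rightarrow> nat \<Rightarrow> nat) \<Rightarrow> edge list \<Rightarrow> (nat \<Rightarrow>\<^sub>0 nat)" where
  "walk_monomial s T = monomial_of (image_mset (edge_var s) (mset T))"

definition walks :: "nat \<Rightarrow> bool list \<Rightarrow> nat \<Rightarrow> nat \<Rightarrow> edge list set" where
  "walks k w r r' = {T. walk_from r T \<and> walk_end r T = r' \<and> map fst T = w \<and> set T \<subseteq> edges k}"

lemma finite_walks: "finite (walks k w r r')"
proof (rule finite_subset)
  show "walks k w r r' \<subseteq> {T. set T \<subseteq> edges k \<and> length T = length w}"
    by (auto simp: walks_def dest: arg_cong[of _ _ length])
  show "finite {T. set T \<subseteq> edges k \<and> length T = length w}"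
    by (rule finite_lists_length_eq) (simp add: edges_def)
qed

lemma walks_Nil: "walks k [] r r' = (if r = r' then {[]} else {})"
  by (auto simp: walks_def)

lemma walks_Cons:
  assumes "r < k"
  shows "walks k (b # w) r r' = (\<lambda>(l, T). (b, r, l) # T) ` (SIGMA l:{..<k}. walks k w l r')"
proof (intro set_eqI iffI)
  fix T assume "T \<in> walks k (b # w) r r'"
  then obtain l T' where "T = (b, r, l) # T'" "l < k" "T' \<in> walks k w l r'"
    by (cases T) (auto simp: walks_def)
  then show "T \<in> (\<lambda>(l, T). (b, r, l) # T) ` (SIGMA l:{..<k}. walks k w l r')" by force
qed (use assms in \<open>auto simp: walks_def\<close>)

lemma walk_monomial_Cons:
  "walk_monomial s (e # T) = Poly_Mapping.single (edge_var s e) 1 + walk_monomial s T"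
  by (simp add: walk_monomial_def monomial_of_def)

lemma word_eval_var_mat:
  assumes "r < k"
  shows "word_eval k (var_mat s True) (var_mat s False) w r r' =
    (\<Sum>T\<in>walks k w r r'. Poly_Mapping.single (walk_monomial s T) 1)"
  using assms
proof (induction w arbitrary: r)
  case Nil
  show ?case by (simp add: walks_Nil mat_one_def walk_monomial_def monomial_of_def)
next
  case (Cons b w)
  have inj: "inj_on (\<lambda>(l, T). (b, r, l) # T) (SIGMA l:{..<k}. walks k w l r')"
    by (auto simp: inj_on_def)
  have "word_eval k (var_mat s True) (var_mat s False) (b # w) r r' =
      (\<Sum>l<k. cvar (s b r l) * word_eval k (var_mat s True) (var_mat s False) w l r')"
    by (cases b) (simp_all add: mat_mult_def var_mat_def)
  also have "\<dots> = (\<Sum>l<k. \<Sum>T\<in>walks k w l r'. Poly_Mapping.single (walk_monomial s ((b, r, l) # T)) 1)"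
    by (simp add: Cons.IH sum_distrib_left cvar_def mult_single walk_monomial_Cons)
  also have "\<dots> = (\<Sum>(l, T)\<in>(SIGMA l:{..<k}. walks k w l r'). Poly_Mapping.single (walk_monomial s ((b, r, l) # T)) 1)"
    by (rule sum.Sigma) (auto simp: finite_walks)
  also have "\<dots> = (\<Sum>T\<in>walks k (b # w) r r'. Poly_Mapping.single (walk_monomial s T) 1)"
    by (simp only: walks_Cons[OF Cons.prems] sum.reindex[OF inj]) (simp add: case_prod_unfold)
  finally show ?case .
qed

lemma image_mset_eq_iff_inj_on:
  assumes "inj_on f D" "set_mset A \<subseteq> D" "set_mset B \<subseteq> D"
  shows "image_mset f A = image_mset f B \<longleftrightarrow> A = B"
proof
  assume eq: "image_mset f A = image_mset f B"
  have "inj_on f (set_mset A \<union> set_mset B)" using assms by (meson inj_on_subset le_sup_iff)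
  then obtain C where "A = B + C" "{#} = image_mset f C"
    using image_mset_eq_image_mset_plusD[of f A B "{#}"] eq by auto
  then show "A = B" by simp
qed simp

lemma sum_keys_fibres:
  assumes "finite C"
  shows "(\<Sum>w\<in>Poly_Mapping.keys p. \<Sum>x\<in>{x \<in> C. f x = w}. Poly_Mapping.lookup p (f x)) =
    (\<Sum>x\<in>C. Poly_Mapping.lookup p (f x))"
proof -
  let ?S = "{x \<in> C. f x \<in> Poly_Mapping.keys p}"
  have "(\<Sum>w\<in>Poly_Mapping.keys p. \<Sum>x\<in>{x \<in> C. f x = w}. Poly_Mapping.lookup p (f x)) =
      (\<Sum>w\<in>Poly_Mapping.keys p. \<Sum>x\<in>{x. x \<in> ?S \<and> f x = w}. Poly_Mapping.lookup p (f x))"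
    by (rule sum.cong[OF refl], rule sum.cong) auto
  also have "\<dots> = (\<Sum>x\<in>?S. Poly_Mapping.lookup p (f x))"
    using assms by (intro sum.group) auto
  also have "\<dots> = (\<Sum>x\<in>C. Poly_Mapping.lookup p (f x))"
    using assms by (intro sum.mono_neutral_left) (auto simp: in_keys_iff)
  finally show ?thesis .
qed

definition trail_weight :: "ncpoly \<Rightarrow> edge multiset \<Rightarrow> nat \<Rightarrow> nat \<Rightarrow> real" where
  "trail_weight p N r r' = (\<Sum>T\<in>euler_trails N r r'. Poly_Mapping.lookup p (map fst T))"

abbreviation nc_eval_vars :: "nat \<Rightarrow> ncpoly \<Rightarrow> (bool \<Rightarrow> nat \<Rightarrow> nat \<Rightarrow> nat) \<Rightarrow> cpoly mat" where
  "nc_eval_vars k p s \<equiv> nc_eval k p (var_mat s True) (var_mat s False)"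

lemma lookup_nc_eval_var_mat:
  assumes inj: "inj_on (edge_var s) (edges k)" and r: "r < k" and N: "set_mset N \<subseteq> edges k"
  shows "Poly_Mapping.lookup (nc_eval_vars k p s r r') (monomial_of (image_mset (edge_var s) N)) =
    trail_weight p N r r'"
proof -
  let ?m = "monomial_of (image_mset (edge_var s) N)"
  let ?C = "euler_trails N r r'"
  let ?c = "\<lambda>T. Poly_Mapping.lookup p (map fst T)"
  have fiber: "{T \<in> walks k w r r'. walk_monomial s T = ?m} = {T \<in> ?C. map fst T = w}" for w
  proof -
    have "walk_monomial s T = ?m \<longleftrightarrow> mset T = N" if "set T \<subseteq> edges k" for T
      using image_mset_eq_iff_inj_on[OF inj _ N, of "mset T"] that
      by (simp add: walk_monomial_def monomial_of_inject)
    then show ?thesis using N by (auto simp: walks_def euler_trails_def walk_monomial_def)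
  qed
  have "Poly_Mapping.lookup (nc_eval_vars k p s r r') ?m =
      (\<Sum>w\<in>Poly_Mapping.keys p. \<Sum>T\<in>walks k w r r'. if walk_monomial s T = ?m then Poly_Mapping.lookup p w else 0)"
    by (simp add: nc_eval_def lookup_sum word_eval_var_mat[OF r] sum_distrib_left cconst_def
        mult_single lookup_single when_def)
  also have "\<dots> = (\<Sum>w\<in>Poly_Mapping.keys p. \<Sum>T\<in>{T \<in> ?C. map fst T = w}. ?c T)"
  proof (rule sum.cong[OF refl])
    fix w
    have "(\<Sum>T\<in>walks k w r r'. if walk_monomial s T = ?m then Poly_Mapping.lookup p w else 0) =
        (\<Sum>T\<in>{T \<in> walks k w r r'. walk_monomial s T = ?m}. Poly_Mapping.lookup p w)"
      by (rule sum.inter_filter[symmetric]) (rule finite_walks)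
    also have "\<dots> = (\<Sum>T\<in>{T \<in> ?C. map fst T = w}. ?c T)"
      unfolding fiber by (rule sum.cong) auto
    finally show "(\<Sum>T\<in>walks k w r r'. if walk_monomial s T = ?m then Poly_Mapping.lookup p w else 0) =
        (\<Sum>T\<in>{T \<in> ?C. map fst T = w}. ?c T)" .
  qed
  also have "\<dots> = trail_weight p N r r'"
    unfolding trail_weight_def using finite_euler_trails by (rule sum_keys_fibres)
  finally show ?thesis .
qed

lemma replicate_append_Cons_replicate: "replicate i x @ x # replicate j x = replicate (Suc (i + j)) x"
  by (induction i) auto

lemma trail_weight_loops_and_edge:
  assumes "a \<noteq> b" "z = a \<or> z = b"
  shows "trail_weight p (replicate_mset n (l, z, z) + {#(l, a, b)#}) a b = Poly_Mapping.lookup p (replicate (Suc n) l)"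
  using assms(2) euler_trails_one_step[OF assms(1), of n l l 0] euler_trails_one_step[OF assms(1), of 0 l l n]
  by (auto simp: trail_weight_def replicate_append_same add.commute)

lemma trail_weight_loops_off_edge:
  assumes "trail_weight p (replicate_mset n (l0, a, a) + {#(l, c, d)#}) r r' \<noteq> 0" "c \<noteq> d" "1 \<le> n"
  shows "a = c \<or> a = d"
proof (rule ccontr)
  assume "\<not> (a = c \<or> a = d)"
  then have "euler_trails (replicate_mset n (l0, a, a) + {#(l, c, d)#}) r r' = {}"
    using assms(2,3) by (intro euler_trails_loops_off_edge) auto
  then show False using assms(1) by (simp add: trail_weight_def)
qed

section \<open>The coefficient sums phi and the class W\<close>

definition swap_word :: "bool \<Rightarrow> nat \<Rightarrow> nat \<Rightarrow> bool list" where
  "swap_word g n i = replicate i g @ (\<not> g) # replicate (n - i) g"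

lemma swap_word_ne_Nil [simp]: "swap_word g n i \<noteq> []"
  by (simp add: swap_word_def)

lemma count_list_replicate: "count_list (replicate m x) y = (if x = y then m else 0)"
  by (induction m) auto

lemma replicate_count_list: "count_list w (\<not> g) = 0 \<Longrightarrow> w = replicate (count_list w g) g"
  by (induction w) auto

lemma words_without_letter: "{w. count_list w g = n \<and> count_list w (\<not> g) = 0} = {replicate n g}"
  using replicate_count_list by (auto simp: count_list_replicate)

lemma words_with_one_letter:
  "{w. count_list w g = n \<and> count_list w (\<not> g) = 1} = swap_word g n ` {..n}"
proof (intro set_eqI iffI)
  fix w assume "w \<in> {w. count_list w g = n \<and> count_list w (\<not> g) = 1}"
  then have cnt: "count_list w g = n" "count_list w (\<not> g) = 1" by auto
  then have "(\<not> g) \<in> set w" by (metis count_notin zero_neq_one)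
  then obtain u v where w: "w = u @ (\<not> g) # v" "(\<not> g) \<notin> set u" by (meson split_list_first)
  have u: "u = replicate (count_list u g) g"
    using w(2) by (intro replicate_count_list) (simp add: count_notin)
  have v: "v = replicate (count_list v g) g"
    using cnt(2) w(1) by (intro replicate_count_list) simp
  have "count_list u g + count_list v g = n" using cnt(1) w(1) by simp
  then have "w = swap_word g n (count_list u g)" "count_list u g \<le> n"
    using u v w(1) unfolding swap_word_def by (metis add_diff_cancel_left', simp)
  then show "w \<in> swap_word g n ` {..n}" by auto
qed (auto simp: swap_word_def count_list_replicate)

lemma inj_on_swap_word: "inj_on (swap_word g n) A"
proof
  fix i j assume "swap_word g n i = swap_word g n j"
  then have "takeWhile (\<lambda>x. x = g) (swap_word g n i) = takeWhile (\<lambda>x. x = g) (swap_word g n j)"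
    by simp
  then show "i = j" by (simp add: swap_word_def takeWhile_append)
qed

lemma count_list_True_False: "count_list w True + count_list w False = length w"
  by (induction w) auto

lemma phiQ_eq_sum_words:
  "phiQ p Q i j = (\<Sum>w | count_list w True = i \<and> count_list w False = j. if Q w then Poly_Mapping.lookup p w else 0)"
proof -
  have fin: "finite {w. count_list w True = i \<and> count_list w False = j}"
  proof (rule finite_subset)
    show "{w. count_list w True = i \<and> count_list w False = j} \<subseteq> {w. set w \<subseteq> UNIV \<and> length w = i + j}"
      using count_list_True_False by auto
  qed (rule finite_lists_length_eq, simp)
  show ?thesis
    unfolding phiQ_def sum.inter_filter[OF fin, symmetric]
    by (rule sum.mono_neutral_left) (auto intro: finite_subset[OF _ fin] simp: in_keys_iff)
qed

lemma phi_replicate: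
  "phi p t 0 = Poly_Mapping.lookup p (replicate t True)"
  "phi p 0 t = Poly_Mapping.lookup p (replicate t False)"
proof -
  have "{w. count_list w True = t \<and> count_list w False = 0} = {replicate t True}"
    "{w. count_list w True = 0 \<and> count_list w False = t} = {replicate t False}"
    using words_without_letter[of True t] words_without_letter[of False t] by (simp_all add: conj_commute)
  then show "phi p t 0 = Poly_Mapping.lookup p (replicate t True)"
    "phi p 0 t = Poly_Mapping.lookup p (replicate t False)"
    by (simp_all add: phi_def phiQ_eq_sum_words)
qed

lemma phiQ_one_letter:
  "phiQ p Q n 1 = (\<Sum>i\<le>n. if Q (swap_word True n i) then Poly_Mapping.lookup p (swap_word True n i) else 0)"
  "phiQ p Q 1 n = (\<Sum>i\<le>n. if Q (swap_word False n i) then Poly_Mapping.lookup p (swap_word False n i) else 0)"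
proof -
  have "{w. count_list w True = n \<and> count_list w False = 1} = swap_word True n ` {..n}"
    "{w. count_list w True = 1 \<and> count_list w False = n} = swap_word False n ` {..n}"
    using words_with_one_letter[of True n] words_with_one_letter[of False n] by (simp_all add: conj_commute)
  then show "phiQ p Q n 1 = (\<Sum>i\<le>n. if Q (swap_word True n i) then Poly_Mapping.lookup p (swap_word True n i) else 0)"
    "phiQ p Q 1 n = (\<Sum>i\<le>n. if Q (swap_word False n i) then Poly_Mapping.lookup p (swap_word False n i) else 0)"
    by (simp_all add: phiQ_eq_sum_words sum.reindex[OF inj_on_swap_word])
qed

lemma sums_swap_word_const:
  assumes "\<forall>i\<le>n. Poly_Mapping.lookup p (swap_word g n i) = c"
  shows "(\<Sum>i\<le>n. Poly_Mapping.lookup p (swap_word g n i)) = real (Suc n) * c"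
    and "(\<Sum>i\<le>n. if swap_word g n i \<noteq> [] \<and> last (swap_word g n i) = (\<not> g)
            then Poly_Mapping.lookup p (swap_word g n i) else 0) = c"
    and "(\<Sum>i\<le>n. if swap_word g n i \<noteq> [] \<and> hd (swap_word g n i) = (\<not> g)
            then Poly_Mapping.lookup p (swap_word g n i) else 0) = c"
proof -
  have last: "last (swap_word g n i) = (\<not> g) \<longleftrightarrow> i = n" if "i \<le> n" for i
    using that by (cases "n - i") (auto simp: swap_word_def)
  have hd: "hd (swap_word g n i) = (\<not> g) \<longleftrightarrow> i = 0" for i
    by (cases i) (auto simp: swap_word_def)
  show "(\<Sum>i\<le>n. Poly_Mapping.lookup p (swap_word g n i)) = real (Suc n) * c"
    using assms by simp
  show "(\<Sum>i\<le>n. if swap_word g n i \<noteq> [] \<and> last (swap_word g n i) = (\<not> g)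
      then Poly_Mapping.lookup p (swap_word g n i) else 0) = c"
  proof -
    have "(\<Sum>i\<le>n. if swap_word g n i \<noteq> [] \<and> last (swap_word g n i) = (\<not> g)
        then Poly_Mapping.lookup p (swap_word g n i) else 0) = (\<Sum>i\<le>n. if i = n then c else 0)"
      using assms by (intro sum.cong) (auto simp: last)
    then show ?thesis by simp
  qed
  show "(\<Sum>i\<le>n. if swap_word g n i \<noteq> [] \<and> hd (swap_word g n i) = (\<not> g)
      then Poly_Mapping.lookup p (swap_word g n i) else 0) = c"
  proof -
    have "(\<Sum>i\<le>n. if swap_word g n i \<noteq> [] \<and> hd (swap_word g n i) = (\<not> g)
        then Poly_Mapping.lookup p (swap_word g n i) else 0) = (\<Sum>i\<le>n. if i = 0 then c else 0)"
      using assms by (intro sum.cong) (auto simp: hd)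
    then show ?thesis by simp
  qed
qed

lemma classW_witness:
  assumes "p \<in> classW"
  obtains t where "2 \<le> t" "\<And>l. Poly_Mapping.lookup p (replicate t l) \<noteq> 0"
    "Poly_Mapping.lookup p (replicate t True) \<noteq> Poly_Mapping.lookup p (replicate t False)"
    "\<not> (\<forall>l. \<forall>i\<le>t - 1. Poly_Mapping.lookup p (swap_word l (t - 1) i) = Poly_Mapping.lookup p (replicate t l))"
proof -
  obtain t where t: "2 \<le> t" and nonzero: "phi p t 0 \<noteq> 0" "phi p 0 t \<noteq> 0"
    and differ: "phi p t 0 \<noteq> phi p 0 t"
    and cond: "real t * phi p t 0 \<noteq> phi p (t - 1) 1
         \<or> real t * phi p 0 t \<noteq> phi p 1 (t - 1)
         \<or> (phi_end p False (t - 1) 1 \<noteq> 0 \<and> phi p t 0 \<noteq> phi_end p False (t - 1) 1)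
         \<or> (phi_begin p False (t - 1) 1 \<noteq> 0 \<and> phi p t 0 \<noteq> phi_begin p False (t - 1) 1)
         \<or> (phi_end p True 1 (t - 1) \<noteq> 0 \<and> phi p 0 t \<noteq> phi_end p True 1 (t - 1))
         \<or> (phi_begin p True 1 (t - 1) \<noteq> 0 \<and> phi p 0 t \<noteq> phi_begin p True 1 (t - 1))"
    using assms unfolding classW_def by blast
  have "\<not> (\<forall>l. \<forall>i\<le>t - 1. Poly_Mapping.lookup p (swap_word l (t - 1) i) = Poly_Mapping.lookup p (replicate t l))"
  proof
    assume const: "\<forall>l. \<forall>i\<le>t - 1. Poly_Mapping.lookup p (swap_word l (t - 1) i) = Poly_Mapping.lookup p (replicate t l)"
    define n where "n = t - 1"
    have t1: "t = Suc n" using t by (simp add: n_def)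
    from const have "\<forall>i\<le>n. Poly_Mapping.lookup p (swap_word True n i) = phi p t 0"
      "\<forall>i\<le>n. Poly_Mapping.lookup p (swap_word False n i) = phi p 0 t"
      by (simp_all add: phi_replicate n_def)
    note X = sums_swap_word_const[OF this(1), folded t1] and Y = sums_swap_word_const[OF this(2), folded t1]
    have "phi p n 1 = real t * phi p t 0" "phi p 1 n = real t * phi p 0 t"
      using X(1) Y(1) unfolding phi_def phiQ_one_letter by simp_all
    moreover have "phi_end p False n 1 = phi p t 0" "phi_begin p False n 1 = phi p t 0"
      using X(2,3) unfolding phi_end_def phi_begin_def phiQ_one_letter by simp_all
    moreover have "phi_end p True 1 n = phi p 0 t" "phi_begin p True 1 n = phi p 0 t"
      using Y(2,3) unfolding phi_end_def phi_begin_def phiQ_one_letter by simp_all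
    ultimately show False using cond by (simp add: n_def)
  qed
  moreover have "Poly_Mapping.lookup p (replicate t l) \<noteq> 0" for l
    using nonzero by (cases l) (simp_all add: phi_replicate)
  ultimately show thesis
    using t differ by (intro that[of t]) (simp_all add: phi_replicate)
qed

section \<open>Two nc representations of one family\<close>

lemma const_on_distinct_pairs:
  assumes sym: "\<And>a b. a \<in> A \<Longrightarrow> b \<in> A \<Longrightarrow> a \<noteq> b \<Longrightarrow> F a b = F b a"
    and chain: "\<And>a b c. a \<in> A \<Longrightarrow> b \<in> A \<Longrightarrow> c \<in> A \<Longrightarrow> a \<noteq> b \<Longrightarrow> b \<noteq> c \<Longrightarrow> a \<noteq> c \<Longrightarrow> F a b = F b c"
    and A: "a \<in> A" "b \<in> A" "c \<in> A" "d \<in> A" and "a \<noteq> b" "c \<noteq> d"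
  shows "F a b = F c d"
proof -
  have first: "F x y = F x' y" if xy: "x \<in> A" "y \<in> A" "x' \<in> A" "x \<noteq> y" "x' \<noteq> y" for x x' y
  proof (cases "x = x'")
    case False
    then have "F x y = F y x'" using chain[OF xy(1-4) xy(5)[symmetric]] by simp
    also have "\<dots> = F x' y" using sym[OF xy(2,3) xy(5)[symmetric]] .
    finally show ?thesis .
  qed simp
  have second: "F x y = F x y'" if xy: "x \<in> A" "y \<in> A" "y' \<in> A" "x \<noteq> y" "x \<noteq> y'" for x y y'
  proof (cases "y = y'")
    case False
    have "F x y = F y x" using sym[OF xy(1,2,4)] .
    also have "\<dots> = F x y'" using chain[OF xy(2,1,3) xy(4)[symmetric] xy(5) False] .
    finally show ?thesis .
  qed simp
  show ?thesis
  proof (cases "b = c")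
    case True
    show ?thesis
    proof (cases "a = d")
      case True
      then show ?thesis using sym[OF A(1,2) \<open>a \<noteq> b\<close>] \<open>b = c\<close> by simp
    next
      case False
      have "F a b = F a d" using second[OF A(1,2,4) \<open>a \<noteq> b\<close> False] .
      also have "\<dots> = F c d" using first[OF A(1,4,3) False \<open>c \<noteq> d\<close>] .
      finally show ?thesis .
    qed
  next
    case False
    have "F a b = F c b" using first[OF A(1,2,3) \<open>a \<noteq> b\<close>] False by simp
    also have "\<dots> = F c d" using second[OF A(3,2,4)] False \<open>c \<noteq> d\<close> by simp
    finally show ?thesis .
  qed
qed

locale nc_rep_pair =
  fixes k :: nat and s s' :: "bool \<Rightarrow> nat \<Rightarrow> nat \<Rightarrow> nat" and p p' :: ncpoly
    and \<sigma> :: "nat \<times> nat \<Rightarrow> nat \<times> nat" and t :: nat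
  assumes inj_s: "inj_on (edge_var s) (edges k)"
    and inj_s': "inj_on (edge_var s') (edges k)"
    and same_vars: "edge_var s ` edges k = edge_var s' ` edges k"
    and \<sigma>_into: "\<sigma> ` ({..<k} \<times> {..<k}) \<subseteq> {..<k} \<times> {..<k}"
    and inj_\<sigma>: "inj_on \<sigma> ({..<k} \<times> {..<k})"
    and same_entries: "\<And>i j. i < k \<Longrightarrow> j < k \<Longrightarrow> nc_eval_vars k p s i j = case_prod (nc_eval_vars k p' s') (\<sigma> (i, j))"
    and two_le_t: "2 \<le> t"
    and power_nonzero: "\<And>l. Poly_Mapping.lookup p (replicate t l) \<noteq> 0"
    and powers_differ: "Poly_Mapping.lookup p (replicate t True) \<noteq> Poly_Mapping.lookup p (replicate t False)"
    and not_swap_invariant: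
      "\<not> (\<forall>l. \<forall>i\<le>t - 1. Poly_Mapping.lookup p (swap_word l (t - 1) i) = Poly_Mapping.lookup p (replicate t l))"
begin

lemma s_inject:
  "a < k \<Longrightarrow> b < k \<Longrightarrow> a' < k \<Longrightarrow> b' < k \<Longrightarrow> s l a b = s l' a' b' \<longleftrightarrow> l = l' \<and> a = a' \<and> b = b'"
  using inj_onD[OF inj_s, of "(l, a, b)" "(l', a', b')"] by auto

lemma s'_inject:
  "a < k \<Longrightarrow> b < k \<Longrightarrow> a' < k \<Longrightarrow> b' < k \<Longrightarrow> s' l a b = s' l' a' b' \<longleftrightarrow> l = l' \<and> a = a' \<and> b = b'"
  using inj_onD[OF inj_s', of "(l, a, b)" "(l', a', b')"] by auto

lemma s_in_s':
  assumes "a < k" "b < k"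
  obtains l' c d where "c < k" "d < k" "s l a b = s' l' c d"
proof -
  have "edge_var s (l, a, b) \<in> edge_var s' ` edges k"
    unfolding same_vars[symmetric] using assms by (intro imageI) simp
  then obtain e where "e \<in> edges k" "edge_var s (l, a, b) = edge_var s' e" by blast
  then show thesis using that by (cases e) auto
qed

lemma \<sigma>_bounds:
  assumes "i < k" "j < k"
  shows "fst (\<sigma> (i, j)) < k \<and> snd (\<sigma> (i, j)) < k"
proof -
  have "\<sigma> (i, j) \<in> {..<k} \<times> {..<k}" using \<sigma>_into assms by blast
  then show ?thesis by (simp add: mem_Times_iff)
qed

lemma weight_transfer:
  assumes "i < k" "j < k" "set_mset N \<subseteq> edges k" "set_mset N' \<subseteq> edges k"
    and "image_mset (edge_var s) N = image_mset (edge_var s') N'"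
  shows "trail_weight p N i j = case_prod (trail_weight p' N') (\<sigma> (i, j))"
proof -
  obtain i' j' where \<sigma>: "\<sigma> (i, j) = (i', j')" "i' < k" "j' < k"
    using \<sigma>_bounds[OF assms(1,2)] by (cases "\<sigma> (i, j)") auto
  have "trail_weight p N i j = Poly_Mapping.lookup (nc_eval_vars k p s i j) (monomial_of (image_mset (edge_var s) N))"
    using lookup_nc_eval_var_mat[OF inj_s assms(1,3)] by simp
  also have "\<dots> = Poly_Mapping.lookup (nc_eval_vars k p' s' i' j') (monomial_of (image_mset (edge_var s') N'))"
    using same_entries[OF assms(1,2)] \<sigma>(1) assms(5) by simp
  also have "\<dots> = trail_weight p' N' i' j'"
    using lookup_nc_eval_var_mat[OF inj_s' \<sigma>(2) assms(4)] by simp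
  finally show ?thesis using \<sigma>(1) by simp
qed

definition diag_perm :: "nat \<Rightarrow> nat" where
  "diag_perm a = (if a < k then fst (\<sigma> (a, a)) else a)"

lemma diag_entry:
  assumes a: "a < k"
  obtains l' where "\<sigma> (a, a) = (diag_perm a, diag_perm a)" "s l a a = s' l' (diag_perm a) (diag_perm a)"
    "Poly_Mapping.lookup p' (replicate t l') = Poly_Mapping.lookup p (replicate t l)"
proof -
  obtain l' c d where cd: "c < k" "d < k" "s l a a = s' l' c d" using s_in_s'[OF a a] .
  have "Poly_Mapping.lookup p (replicate t l) = trail_weight p (replicate_mset t (l, a, a)) a a"
    by (simp add: trail_weight_def euler_trails_loop_power[OF two_le_t])
  also have "\<dots> = case_prod (trail_weight p' (replicate_mset t (l', c, d))) (\<sigma> (a, a))"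
    using a cd by (intro weight_transfer) auto
  finally have "Poly_Mapping.lookup p (replicate t l) =
      (if c = d \<and> \<sigma> (a, a) = (c, c) then Poly_Mapping.lookup p' (replicate t l') else 0)"
    by (cases "\<sigma> (a, a)") (auto simp: trail_weight_def euler_trails_loop_power[OF two_le_t])
  with power_nonzero[of l] have "c = d" "\<sigma> (a, a) = (c, c)"
    "Poly_Mapping.lookup p' (replicate t l') = Poly_Mapping.lookup p (replicate t l)"
    by (auto split: if_splits)
  then show thesis using that cd a by (simp add: diag_perm_def)
qed

lemma \<sigma>_diag: "a < k \<Longrightarrow> \<sigma> (a, a) = (diag_perm a, diag_perm a)"
  using diag_entry by blast

lemma diag_perm_bound: "a < k \<Longrightarrow> diag_perm a < k"
  using \<sigma>_bounds by (simp add: diag_perm_def)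

lemma diag_perm_permutes: "diag_perm permutes {..<k}"
proof (rule bij_imp_permutes)
  have "inj_on diag_perm {..<k}"
  proof
    fix a b assume ab: "a \<in> {..<k}" "b \<in> {..<k}" and "diag_perm a = diag_perm b"
    then have "\<sigma> (a, a) = \<sigma> (b, b)" by (simp add: \<sigma>_diag)
    then show "a = b" using inj_onD[OF inj_\<sigma>] ab by blast
  qed
  moreover have "diag_perm ` {..<k} = {..<k}"
    using calculation diag_perm_bound by (intro endo_inj_surj) auto
  ultimately show "bij_betw diag_perm {..<k} {..<k}" by (simp add: bij_betw_def)
qed (simp add: diag_perm_def)

text \<open>As p(X^t) \<noteq> p(Y^t), the coefficient of X'^t in p' tells whether X corresponds to X' or to Y'.\<close>

definition keeps_letters :: bool where
  "keeps_letters \<longleftrightarrow> Poly_Mapping.lookup p' (replicate t True) = Poly_Mapping.lookup p (replicate t True)"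

lemma diag_var:
  assumes a: "a < k"
  shows "s l a a = s' (l = keeps_letters) (diag_perm a) (diag_perm a)"
proof -
  obtain l1 where l1: "\<sigma> (a, a) = (diag_perm a, diag_perm a)" "s True a a = s' l1 (diag_perm a) (diag_perm a)"
    "Poly_Mapping.lookup p' (replicate t l1) = Poly_Mapping.lookup p (replicate t True)"
    by (rule diag_entry[OF a])
  obtain l2 where l2: "\<sigma> (a, a) = (diag_perm a, diag_perm a)" "s False a a = s' l2 (diag_perm a) (diag_perm a)"
    "Poly_Mapping.lookup p' (replicate t l2) = Poly_Mapping.lookup p (replicate t False)"
    by (rule diag_entry[OF a])
  have "l1 \<noteq> l2"
  proof
    assume "l1 = l2"
    then have "s True a a = s False a a" using l1(2) l2(2) by simp
    then show False using s_inject[OF a a a a] by simp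
  qed
  moreover have "l1 = keeps_letters"
    using l1(3) l2(3) \<open>l1 \<noteq> l2\<close> powers_differ by (cases l1; cases l2) (auto simp: keeps_letters_def)
  ultimately show ?thesis using l1(2) l2(2) by (cases l; cases l2) auto
qed

lemma power_coeff_keeps_letters:
  assumes k: "0 < k"
  shows "Poly_Mapping.lookup p' (replicate t (l = keeps_letters)) = Poly_Mapping.lookup p (replicate t l)"
proof -
  obtain l' where l': "\<sigma> (0, 0) = (diag_perm 0, diag_perm 0)" "s l 0 0 = s' l' (diag_perm 0) (diag_perm 0)"
    "Poly_Mapping.lookup p' (replicate t l') = Poly_Mapping.lookup p (replicate t l)"
    by (rule diag_entry[OF k])
  have "s' l' (diag_perm 0) (diag_perm 0) = s' (l = keeps_letters) (diag_perm 0) (diag_perm 0)"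
    using l'(2) diag_var[OF k, of l] by simp
  then have "l' = (l = keeps_letters)"
    using s'_inject diag_perm_bound[OF k] by simp
  with l'(3) show ?thesis by simp
qed

lemma diag_perm_inject: "diag_perm a = diag_perm b \<longleftrightarrow> a = b"
  using permutes_inj[OF diag_perm_permutes] by (simp add: inj_eq)

lemma offdiag_var_not_diag:
  assumes ab: "a < k" "b < k" "a \<noteq> b" and cd: "c < k" "s l a b = s' l' c c"
  shows False
proof -
  obtain a' where a': "a' < k" "diag_perm a' = c"
    using permutes_image[OF diag_perm_permutes] cd(1) by (metis lessThan_iff imageE)
  have "((l' = keeps_letters) = keeps_letters) = l'" by blast
  then have "s l a b = s (l' = keeps_letters) a' a'"
    using cd(2) diag_var[OF a'(1), of "l' = keeps_letters"] a'(2) by simp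
  then show False using s_inject[OF ab(1,2) a'(1) a'(1)] ab(3) by simp
qed

lemma offdiag_loop_weight:
  assumes ab: "a < k" "b < k" "a \<noteq> b" and cd: "c < k" "d < k" and var: "s l a b = s' l' c d"
    and z: "z = a \<or> z = b"
  shows "case_prod (trail_weight p' (replicate_mset (t - 1) (l = keeps_letters, diag_perm z, diag_perm z)
    + {#(l', c, d)#})) (\<sigma> (a, b)) = Poly_Mapping.lookup p (replicate t l)"
proof -
  have zk: "z < k" using z ab by auto
  have t: "Suc (t - 1) = t" using two_le_t by simp
  have "Poly_Mapping.lookup p (replicate t l) =
      trail_weight p (replicate_mset (t - 1) (l, z, z) + {#(l, a, b)#}) a b"
    using trail_weight_loops_and_edge[OF ab(3) z, of p "t - 1" l, unfolded t] by simp
  also have "\<dots> = case_prod (trail_weight p' (replicate_mset (t - 1) (l = keeps_letters, diag_perm z, diag_perm z)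
    + {#(l', c, d)#})) (\<sigma> (a, b))"
    using zk ab cd diag_perm_bound[OF zk] diag_var[OF zk, of l] var by (intro weight_transfer) auto
  finally show ?thesis by simp
qed

lemma offdiag_position:
  assumes ab: "a < k" "b < k" "a \<noteq> b" and cd: "c < k" "d < k" and var: "s l a b = s' l' c d"
  shows "\<sigma> (a, b) = (c, d) \<and> ((c, d) = (diag_perm a, diag_perm b) \<or> (c, d) = (diag_perm b, diag_perm a))"
proof -
  let ?\<pi> = diag_perm and ?g = keeps_letters
  obtain x y where xy: "\<sigma> (a, b) = (x, y)" by (cases "\<sigma> (a, b)")
  have "c \<noteq> d" using offdiag_var_not_diag[OF ab cd(1)] var by blast
  have t1: "1 \<le> t - 1" using two_le_t by simp
  have w: "trail_weight p' (replicate_mset (t - 1) (l = ?g, ?\<pi> z, ?\<pi> z) + {#(l', c, d)#}) x y =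
      Poly_Mapping.lookup p (replicate t l)" if "z = a \<or> z = b" for z
    using offdiag_loop_weight[OF ab cd var that] xy by simp
  have "?\<pi> z = c \<or> ?\<pi> z = d" if "z = a \<or> z = b" for z
    using w[OF that] power_nonzero[of l]
    by (intro trail_weight_loops_off_edge[OF _ \<open>c \<noteq> d\<close> t1, of p' "l = ?g" _ l' x y]) simp
  then have cases: "c = ?\<pi> a \<and> d = ?\<pi> b \<or> c = ?\<pi> b \<and> d = ?\<pi> a"
    using diag_perm_inject[of a b] ab(3) \<open>c \<noteq> d\<close> by blast
  then have "trail_weight p' (replicate_mset (t - 1) (l = ?g, c, c) + {#(l', c, d)#}) x y =
      Poly_Mapping.lookup p (replicate t l)"
    using w by auto
  moreover have "trail_weight p' (replicate_mset (t - 1) (l = ?g, c, c) + {#(l', c, d)#}) x y =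
      (if x = c \<and> y = d then Poly_Mapping.lookup p' (replicate (t - 1) (l = ?g) @ [l']) else 0)"
    using euler_trails_one_step[OF \<open>c \<noteq> d\<close>, of "t - 1" "l = ?g" l' 0 x y] by (simp add: trail_weight_def)
  ultimately have "\<sigma> (a, b) = (c, d)"
    using power_nonzero[of l] xy by (auto split: if_splits)
  with cases show ?thesis by auto
qed

lemma reversed_letters_swap_invariant:
  assumes ab: "a < k" "b < k" "a \<noteq> b"
    and reversed: "\<And>m. s m a b = case_prod (s' (m \<noteq> keeps_letters)) (\<sigma> (a, b))"
    and i: "i \<le> t - 1"
  shows "Poly_Mapping.lookup p (swap_word l (t - 1) i) = Poly_Mapping.lookup p (replicate t l)"
proof -
  let ?\<pi> = diag_perm and ?g = keeps_letters
  obtain x y where xy: "\<sigma> (a, b) = (x, y)" by (cases "\<sigma> (a, b)")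
  have bounds: "x < k" "y < k" using \<sigma>_bounds[OF ab(1,2)] xy by auto
  have pos: "(x, y) = (?\<pi> a, ?\<pi> b) \<or> (x, y) = (?\<pi> b, ?\<pi> a)"
    using offdiag_position[OF ab bounds, of True] reversed[of True] xy by simp
  have \<pi>ab: "?\<pi> a \<noteq> ?\<pi> b" "?\<pi> a < k" "?\<pi> b < k"
    using ab diag_perm_inject diag_perm_bound by auto
  obtain m where tm: "t = Suc (i + m)" using i two_le_t by (intro that[of "t - 1 - i"]) simp
  let ?N = "replicate_mset i (l, a, a) + {#(\<not> l, a, b)#} + replicate_mset (t - 1 - i) (l, b, b)"
  let ?N' = "replicate_mset i (l = ?g, ?\<pi> a, ?\<pi> a) + {#(l = ?g, x, y)#}
    + replicate_mset (t - 1 - i) (l = ?g, ?\<pi> b, ?\<pi> b)"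
  have "Poly_Mapping.lookup p (swap_word l (t - 1) i) = trail_weight p ?N a b"
    using euler_trails_one_step[OF ab(3), of i l "\<not> l" "t - 1 - i" a b]
    by (simp add: trail_weight_def swap_word_def)
  also have "\<dots> = trail_weight p' ?N' x y"
  proof -
    have "((\<not> l) \<noteq> ?g) = (l = ?g)" by blast
    then have "s (\<not> l) a b = s' (l = ?g) x y" using reversed[of "\<not> l"] xy by simp
    then show ?thesis
      using weight_transfer[OF ab(1,2), of ?N ?N'] ab bounds \<pi>ab xy diag_var[OF ab(1), of l]
        diag_var[OF ab(2), of l] by simp
  qed
  also have "\<dots> = Poly_Mapping.lookup p' (replicate t (l = ?g))"
    using pos
  proof
    assume "(x, y) = (?\<pi> a, ?\<pi> b)"
    then show ?thesis
      using euler_trails_one_step[OF \<pi>ab(1), of i "l = ?g" "l = ?g" "t - 1 - i" x y]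
      by (simp add: trail_weight_def tm replicate_append_Cons_replicate)
  next
    assume "(x, y) = (?\<pi> b, ?\<pi> a)"
    then show ?thesis
      using euler_trails_one_step[OF \<pi>ab(1)[symmetric], of "t - 1 - i" "l = ?g" "l = ?g" i x y]
      by (simp add: trail_weight_def tm replicate_append_Cons_replicate add_ac)
  qed
  also have "\<dots> = Poly_Mapping.lookup p (replicate t l)"
    using power_coeff_keeps_letters ab(1) by simp
  finally show ?thesis .
qed

lemma offdiag_var:
  assumes ab: "a < k" "b < k" "a \<noteq> b"
  shows "s l a b = case_prod (s' (l = keeps_letters)) (\<sigma> (a, b))"
proof -
  obtain l1 c d where cd: "c < k" "d < k" and l1: "s True a b = s' l1 c d" by (rule s_in_s'[OF ab(1,2)])
  obtain l2 c' d' where cd': "c' < k" "d' < k" and l2: "s False a b = s' l2 c' d'" by (rule s_in_s'[OF ab(1,2)])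
  have \<sigma>: "\<sigma> (a, b) = (c, d)" "\<sigma> (a, b) = (c', d')"
    using offdiag_position[OF ab cd l1] offdiag_position[OF ab cd' l2] by auto
  have "l1 \<noteq> l2"
  proof
    assume "l1 = l2"
    then have "s True a b = s False a b" using l1 l2 \<sigma> by simp
    then show False using s_inject[OF ab(1,2) ab(1,2)] by simp
  qed
  have "l1 = keeps_letters"
  proof (rule ccontr)
    assume "l1 \<noteq> keeps_letters"
    then have "s m a b = case_prod (s' (m \<noteq> keeps_letters)) (\<sigma> (a, b))" for m
      using l1 l2 \<sigma> \<open>l1 \<noteq> l2\<close> by (cases m) auto
    then have "\<forall>l. \<forall>i\<le>t - 1. Poly_Mapping.lookup p (swap_word l (t - 1) i) = Poly_Mapping.lookup p (replicate t l)"
      using reversed_letters_swap_invariant[OF ab] by blast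
    then show False using not_swap_invariant by blast
  qed
  then show ?thesis using l1 l2 \<sigma> \<open>l1 \<noteq> l2\<close> by (cases l) auto
qed

definition transposes :: "nat \<Rightarrow> nat \<Rightarrow> bool" where
  "transposes a b \<longleftrightarrow> \<sigma> (a, b) = (diag_perm b, diag_perm a)"

lemma offdiag_\<sigma>:
  assumes ab: "a < k" "b < k" "a \<noteq> b"
  shows "\<sigma> (a, b) = (if transposes a b then (diag_perm b, diag_perm a) else (diag_perm a, diag_perm b))"
proof -
  obtain l c d where "c < k" "d < k" "s True a b = s' l c d" by (rule s_in_s'[OF ab(1,2)])
  then show ?thesis using offdiag_position[OF ab] by (auto simp: transposes_def)
qed

lemma transposes_sym:
  assumes ab: "a < k" "b < k" "a \<noteq> b"
  shows "transposes a b = transposes b a"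
proof (rule ccontr)
  assume "transposes a b \<noteq> transposes b a"
  then have "\<sigma> (a, b) = \<sigma> (b, a)"
    using offdiag_\<sigma>[OF ab] offdiag_\<sigma>[OF ab(2,1) ab(3)[symmetric]] by auto
  then show False using inj_onD[OF inj_\<sigma>] ab by auto
qed

text \<open>If (a, b) and (b, c) had different orientations, \<pi> b would be the head of both or the tail of both
  non-loop edges in the image of the trail from a through b to c, which then has no Eulerian trail.\<close>

lemma transposes_chain:
  assumes abc: "a < k" "b < k" "c < k" "a \<noteq> b" "b \<noteq> c" "a \<noteq> c"
  shows "transposes a b = transposes b c"
proof (rule ccontr)
  assume differ: "transposes a b \<noteq> transposes b c"
  let ?\<pi> = diag_perm and ?g = keeps_letters
  have \<pi>: "?\<pi> a \<noteq> ?\<pi> b" "?\<pi> b \<noteq> ?\<pi> c" "?\<pi> a < k" "?\<pi> b < k" "?\<pi> c < k"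
    using abc diag_perm_inject diag_perm_bound by auto
  obtain x y where xy: "\<sigma> (a, c) = (x, y)" "x < k" "y < k"
    using \<sigma>_bounds[OF abc(1,3)] by (cases "\<sigma> (a, c)") auto
  let ?N = "replicate_mset (t - 2) (True, a, a) + {#(True, a, b)#} + {#(True, b, c)#}"
  let ?N' = "replicate_mset (t - 2) (?g, ?\<pi> a, ?\<pi> a) + {#(?g, \<sigma> (a, b))#} + {#(?g, \<sigma> (b, c))#}"
  have "Poly_Mapping.lookup p (replicate t True) = trail_weight p ?N a c"
  proof -
    have "replicate (t - 2) True @ [True, True] = replicate t True"
      using two_le_t by (metis le_add_diff_inverse2 replicate_add numeral_2_eq_2 replicate_Suc replicate_0)
    then show ?thesis
      using euler_trails_two_steps[OF abc(4-6)] by (simp add: trail_weight_def)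
  qed
  also have "\<dots> = trail_weight p' ?N' x y"
    using weight_transfer[OF abc(1,3), of ?N ?N'] abc \<pi> xy \<sigma>_bounds[OF abc(1,2)] \<sigma>_bounds[OF abc(2,3)]
      diag_var[OF abc(1), of True] offdiag_var[OF abc(1,2,4), of True] offdiag_var[OF abc(2,3,5), of True]
    by (cases "\<sigma> (a, b)"; cases "\<sigma> (b, c)") auto
  also have "\<dots> = 0"
  proof -
    have "out_degree ?N' (?\<pi> b) + 2 \<le> in_degree ?N' (?\<pi> b) \<or> in_degree ?N' (?\<pi> b) + 2 \<le> out_degree ?N' (?\<pi> b)"
      using differ \<pi> offdiag_\<sigma>[OF abc(1,2,4)] offdiag_\<sigma>[OF abc(2,3,5)]
      by (auto simp: in_degree_def out_degree_def filter_mset_replicate_mset)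
    then show ?thesis by (simp add: trail_weight_def euler_trails_unbalanced)
  qed
  finally show False using power_nonzero by simp
qed

theorem relabelling:
  obtains f where "\<And>l i j. i < k \<Longrightarrow> j < k \<Longrightarrow>
    s l i j = s' (l = keeps_letters) (if f then diag_perm j else diag_perm i) (if f then diag_perm i else diag_perm j)"
proof
  fix l i j assume ij: "i < k" "j < k"
  show "s l i j = s' (l = keeps_letters) (if transposes 0 1 then diag_perm j else diag_perm i)
      (if transposes 0 1 then diag_perm i else diag_perm j)"
  proof (cases "i = j")
    case True
    then show ?thesis using diag_var[OF ij(1)] by simp
  next
    case False
    have "transposes i j = transposes 0 1"
    proof (rule const_on_distinct_pairs[where A = "{..<k}"])
      show "transposes a b = transposes b a" if "a \<in> {..<k}" "b \<in> {..<k}" "a \<noteq> b" for a b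
        using that by (intro transposes_sym) auto
      show "transposes a b = transposes b c"
        if "a \<in> {..<k}" "b \<in> {..<k}" "c \<in> {..<k}" "a \<noteq> b" "b \<noteq> c" "a \<noteq> c" for a b c
        using that by (intro transposes_chain) auto
    qed (use ij False in auto)
    then show ?thesis using offdiag_var[OF ij False] offdiag_\<sigma>[OF ij False] by simp
  qed
qed

end

lemma nc_reps_match:
  assumes "nc_rep k P s p" "nc_rep k P s' p'"
  obtains \<sigma> where "inj_on (edge_var s) (edges k)" "inj_on (edge_var s') (edges k)"
    "edge_var s ` edges k = edge_var s' ` edges k"
    "\<sigma> ` ({..<k} \<times> {..<k}) \<subseteq> {..<k} \<times> {..<k}" "inj_on \<sigma> ({..<k} \<times> {..<k})"
    "\<And>i j. i < k \<Longrightarrow> j < k \<Longrightarrow> nc_eval_vars k p s i j = case_prod (nc_eval_vars k p' s') (\<sigma> (i, j))"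
proof -
  have vars: "(\<lambda>(b, i, j). s b i j) = edge_var s" "(\<lambda>(b, i, j). s' b i j) = edge_var s'"
    "UNIV \<times> {..<k} \<times> {..<k} = edges k"
    by (auto simp: edge_var_def edges_def)
  obtain \<tau> where s: "bij_betw (edge_var s) (edges k) {..<2 * k\<^sup>2}"
    and \<tau>: "bij_betw \<tau> ({..<k} \<times> {..<k}) {..<k\<^sup>2}"
    and entries: "\<And>i j. i < k \<Longrightarrow> j < k \<Longrightarrow> nc_eval_vars k p s i j = P (\<tau> (i, j))"
    using assms(1) unfolding nc_rep_def vars by blast
  obtain \<tau>' where s': "bij_betw (edge_var s') (edges k) {..<2 * k\<^sup>2}"
    and \<tau>': "bij_betw \<tau>' ({..<k} \<times> {..<k}) {..<k\<^sup>2}"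
    and entries': "\<And>i j. i < k \<Longrightarrow> j < k \<Longrightarrow> nc_eval_vars k p' s' i j = P (\<tau>' (i, j))"
    using assms(2) unfolding nc_rep_def vars by blast
  define \<sigma> where "\<sigma> = inv_into ({..<k} \<times> {..<k}) \<tau>' \<circ> \<tau>"
  have \<sigma>: "bij_betw \<sigma> ({..<k} \<times> {..<k}) ({..<k} \<times> {..<k})"
    unfolding \<sigma>_def using \<tau> bij_betw_inv_into[OF \<tau>'] by (rule bij_betw_trans)
  have \<tau>'\<sigma>: "\<tau>' (\<sigma> ij) = \<tau> ij" if "ij \<in> {..<k} \<times> {..<k}" for ij
    unfolding \<sigma>_def using bij_betw_inv_into_right[OF \<tau>' bij_betw_apply[OF \<tau> that]] by simp
  have match: "nc_eval_vars k p s i j = case_prod (nc_eval_vars k p' s') (\<sigma> (i, j))" if ij: "i < k" "j < k" for i j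
  proof -
    obtain i' j' where \<sigma>ij: "\<sigma> (i, j) = (i', j')" by (cases "\<sigma> (i, j)")
    have "(i', j') \<in> {..<k} \<times> {..<k}" using bij_betw_apply[OF \<sigma>] ij \<sigma>ij by (metis SigmaI lessThan_iff)
    then show ?thesis using entries[OF ij] entries' \<tau>'\<sigma>[of "(i, j)"] ij \<sigma>ij by simp
  qed
  show thesis
  proof (rule that[OF _ _ _ _ _ match])
    show "inj_on (edge_var s) (edges k)" "inj_on (edge_var s') (edges k)" "inj_on \<sigma> ({..<k} \<times> {..<k})"
      using s s' \<sigma> by (simp_all add: bij_betw_imp_inj_on)
    show "edge_var s ` edges k = edge_var s' ` edges k" "\<sigma> ` ({..<k} \<times> {..<k}) \<subseteq> {..<k} \<times> {..<k}"
      using s s' \<sigma> by (simp_all add: bij_betw_imp_surj_on)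
  qed
qed

lemma conj_perm_permutation_matrix:
  fixes \<pi> :: "nat \<Rightarrow> nat"
  assumes \<pi>: "\<pi> permutes {..<k}"
  obtains Q :: "'a::comm_semiring_1 mat" where "is_perm_mat k Q"
    "\<And>A i j. i < k \<Longrightarrow> j < k \<Longrightarrow> conj_perm k Q A i j = A (\<pi> i) (\<pi> j)"
proof
  let ?Q = "\<lambda>m i. if inv \<pi> m = i then 1 else 0 :: 'a"
  show "is_perm_mat k ?Q"
    unfolding is_perm_mat_def using permutes_inv[OF \<pi>] by blast
  fix A :: "'a mat" and i j assume ij: "i < k" "j < k"
  have inv: "inv \<pi> m = i \<longleftrightarrow> m = \<pi> i" for m i
    using \<pi> by (metis permutes_inverses)
  have \<pi>ij: "\<pi> i < k" "\<pi> j < k" using permutes_in_image[OF \<pi>] ij by auto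
  have row: "(\<Sum>m<k. ?Q m i * A m l) = A (\<pi> i) l" for l
  proof -
    have "(\<Sum>m<k. ?Q m i * A m l) = (\<Sum>m<k. if m = \<pi> i then A m l else 0)"
      by (rule sum.cong) (auto simp: inv)
    then show ?thesis using \<pi>ij(1) by simp
  qed
  have "conj_perm k ?Q A i j = (\<Sum>l<k. A (\<pi> i) l * ?Q l j)"
    by (simp add: conj_perm_def mat_mult_def mat_transpose_def row)
  also have "\<dots> = (\<Sum>l<k. if l = \<pi> j then A (\<pi> i) l else 0)"
    by (rule sum.cong) (auto simp: inv)
  also have "\<dots> = A (\<pi> i) (\<pi> j)"
    using \<pi>ij(2) by simp
  finally show "conj_perm k ?Q A i j = A (\<pi> i) (\<pi> j)" .
qed

theorem theorem1p5:
  fixes k :: nat and P :: "nat \<Rightarrow> cpoly"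
    and s s' :: "bool \<Rightarrow> nat \<Rightarrow> nat \<Rightarrow> nat" and p p' :: ncpoly
  assumes "k \<ge> 1"
    and "nc_rep k P s p" and "nc_rep k P s' p'"
    and "p \<in> classW" and "p' \<in> classW"
  shows "\<exists>Q :: cpoly mat. is_perm_mat k Q \<and>
    (let X = var_mat s True; Y = var_mat s False;
         X' = var_mat s' True; Y' = var_mat s' False in
      (mat_eq k X (conj_perm k Q X') \<and> mat_eq k Y (conj_perm k Q Y'))
    \<or> (mat_eq k X (conj_perm k Q (mat_transpose X')) \<and> mat_eq k Y (conj_perm k Q (mat_transpose Y')))
    \<or> (mat_eq k X (conj_perm k Q Y') \<and> mat_eq k Y (conj_perm k Q X'))
    \<or> (mat_eq k X (conj_perm k Q (mat_transpose Y')) \<and> mat_eq k Y (conj_perm k Q (mat_transpose X'))))"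
proof -
  obtain t where t: "2 \<le> t" "\<And>l. Poly_Mapping.lookup p (replicate t l) \<noteq> 0"
    "Poly_Mapping.lookup p (replicate t True) \<noteq> Poly_Mapping.lookup p (replicate t False)"
    "\<not> (\<forall>l. \<forall>i\<le>t - 1. Poly_Mapping.lookup p (swap_word l (t - 1) i) = Poly_Mapping.lookup p (replicate t l))"
    using classW_witness[OF assms(4)] by blast
  obtain \<sigma> where "nc_rep_pair k s s' p p' \<sigma> t"
    using nc_reps_match[OF assms(2,3)] t by (metis nc_rep_pair.intro)
  then interpret nc_rep_pair k s s' p p' \<sigma> t .
  obtain f where relabel: "\<And>l i j. i < k \<Longrightarrow> j < k \<Longrightarrow> s l i j =
      s' (l = keeps_letters) (if f then diag_perm j else diag_perm i) (if f then diag_perm i else diag_perm j)"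
    using relabelling by blast
  obtain Q :: "cpoly mat" where Q: "is_perm_mat k Q"
    "\<And>A i j. i < k \<Longrightarrow> j < k \<Longrightarrow> conj_perm k Q A i j = A (diag_perm i) (diag_perm j)"
    using conj_perm_permutation_matrix[OF diag_perm_permutes] by blast
  show ?thesis
    using Q relabel
    by (intro exI[of _ Q]) (cases keeps_letters; cases f; simp add: mat_eq_def var_mat_def mat_transpose_def)
qed

end
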